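(* Let $T:\mathbb{R}_+^N\to\mathbb{R}_{++}^N$ be a standard interference mapping, let $\|\cdot\|_a$ and $\|\cdot\|_b$ be monotone norms on $\mathbb{R}^N$, and let $E$ be the $\|\cdot\|_b$-energy efficiency function defined in the context. Then $E$ is non-increasing: for all $\bar p_1>\bar p_2>0$, $E(\bar p_1)\le E(\bar p_2)$.
   Context: Vector inequalities are coordinatewise; $\mathbb{R}_+$, $\mathbb{R}_{++}$ denote nonnegative and positive reals. A norm $\|\cdot\|$ on $\mathbb{R}^N$ is monotone if $\mathbf{0}\le\mathbf{x}\le\mathbf{y}$ implies $\|\mathbf{x}\|\le\|\mathbf{y}\|$. A function $f:\mathbb{R}^N\to\mathbb{R}_{++}\cup\{\infty\}$ is a standard interference function if: (1) for all $\mathbf{x}\in\mathbb{R}_+^N$ and all $\alpha>1$, $\alpha f(\mathbf{x})>f(\alpha\mathbf{x})$; (2) for all $\mathbf{x}_1,\mathbf{x}_2\in\mathbb{R}_+^N$, $\mathbf{x}_1\ge\mathbf{x}_2$ implies $f(\mathbf{x}_1)\ge f(\mathbf{x}_2)$; (3) $f(\mathbf{x})=\infty$ iff $\mathbf{x}\notin\mathbb{R}_+^N$. A standard interference mapping is $T:\mathbb{R}_+^N\to\mathbb{R}_{++}^N$, $T(\mathbf{x})=(t_1(\mathbf{x}),\dots,t_N(\mathbf{x}))$, with each $t_i$ a standard interference function. For a power budget $\bar p>0$, consider the problem: maximize $c$ over $(\mathbf{p},c)\in\mathbb{R}_+^N\times\mathbb{R}_{++}$ subject to $\mathbf{p}=cT(\mathbf{p})$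 and $\|\mathbf{p}\|_a\le\bar p$. It is known that this problem has a unique solution $(\mathbf{p}_{\bar p},c_{\bar p})\in\mathbb{R}_{++}^N\times\mathbb{R}_{++}$, and that $\bar p_1>\bar p_2>0$ implies $\mathbf{p}_{\bar p_1}>\mathbf{p}_{\bar p_2}$ coordinatewise. Define $U(\bar p):=c_{\bar p}$, $P(\bar p):=\mathbf{p}_{\bar p}$, and $E(\bar p):=U(\bar p)/\|P(\bar p)\|_b$, which equals $1/\|T(\mathbf{p}_{\bar p})\|_b$. *)

theory Defs
  imports "HOL-Analysis.Analysis"
begin

definition nonneg_vec :: "real ^ 'n \<Rightarrow> bool" where
  "nonneg_vec x \<longleftrightarrow> (\<forall>i. 0 \<le> x $ i)"

definition vec_le :: "real ^ 'n \<Rightarrow> real ^ 'n \<Rightarrow> bool" where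
  "vec_le x y \<longleftrightarrow> (\<forall>i. x $ i \<le> y $ i)"

definition is_norm :: "(real ^ 'n \<Rightarrow> real) \<Rightarrow> bool" where
  "is_norm nm \<longleftrightarrow>
     (\<forall>x. 0 \<le> nm x) \<and> (\<forall>x. nm x = 0 \<longleftrightarrow> x = 0) \<and>
     (\<forall>a x. nm (a *\<^sub>R x) = \<bar>a\<bar> * nm x) \<and>
     (\<forall>x y. nm (x + y) \<le> nm x + nm y)"

definition monotone_norm :: "(real ^ 'n \<Rightarrow> real) \<Rightarrow> bool" where
  "monotone_norm nm \<longleftrightarrow> is_norm nm \<and>
     (\<forall>x y. nonneg_vec x \<and> vec_le x y \<longrightarrow> nm x \<le> nm y)"

text \<open>Standard interference function, considered on its effective domain R_+^N
  (outside R_+^N its value is +infinity by convention, which is not recorded).\<close>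
definition standard_interference_function :: "(real ^ 'n \<Rightarrow> real) \<Rightarrow> bool" where
  "standard_interference_function f \<longleftrightarrow>
     (\<forall>x. nonneg_vec x \<longrightarrow> 0 < f x) \<and>
     (\<forall>x \<alpha>. nonneg_vec x \<and> 1 < \<alpha> \<longrightarrow> f (\<alpha> *\<^sub>R x) < \<alpha> * f x) \<and>
     (\<forall>x1 x2. nonneg_vec x1 \<and> nonneg_vec x2 \<and> vec_le x2 x1 \<longrightarrow> f x2 \<le> f x1)"

definition standard_interference_mapping :: "(real ^ 'n \<Rightarrow> real ^ 'n) \<Rightarrow> bool" where
  "standard_interference_mapping T \<longleftrightarrow>
     (\<forall>i. standard_interference_function (\<lambda>x. T x $ i))"

definition feasible ::
  "(real ^ 'n \<Rightarrow> real ^ 'n) \<Rightarrow> (real ^ 'n \<Rightarrow> real) \<Rightarrow> real \<Rightarrow> real ^ 'n \<Rightarrow> real \<Rightarrow> bool" where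
  "feasible T na pbar p c \<longleftrightarrow>
     nonneg_vec p \<and> 0 < c \<and> p = c *\<^sub>R T p \<and> na p \<le> pbar"

definition is_solution ::
  "(real ^ 'n \<Rightarrow> real ^ 'n) \<Rightarrow> (real ^ 'n \<Rightarrow> real) \<Rightarrow> real \<Rightarrow> real ^ 'n \<Rightarrow> real \<Rightarrow> bool" where
  "is_solution T na pbar p c \<longleftrightarrow>
     feasible T na pbar p c \<and> (\<forall>p' c'. feasible T na pbar p' c' \<longrightarrow> c' \<le> c)"

definition sol :: "(real ^ 'n \<Rightarrow> real ^ 'n) \<Rightarrow> (real ^ 'n \<Rightarrow> real) \<Rightarrow> real \<Rightarrow> (real ^ 'n) \<times> real" where
  "sol T na pbar = (THE pc. is_solution T na pbar (fst pc) (snd pc))"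

definition U :: "(real ^ 'n \<Rightarrow> real ^ 'n) \<Rightarrow> (real ^ 'n \<Rightarrow> real) \<Rightarrow> real \<Rightarrow> real" where
  "U T na pbar = snd (sol T na pbar)"

definition P :: "(real ^ 'n \<Rightarrow> real ^ 'n) \<Rightarrow> (real ^ 'n \<Rightarrow> real) \<Rightarrow> real \<Rightarrow> real ^ 'n" where
  "P T na pbar = fst (sol T na pbar)"

definition E ::
  "(real ^ 'n \<Rightarrow> real ^ 'n) \<Rightarrow> (real ^ 'n \<Rightarrow> real) \<Rightarrow> (real ^ 'n \<Rightarrow> real) \<Rightarrow> real \<Rightarrow> real" where
  "E T na nb pbar = U T na pbar / nb (P T na pbar)"

end

theory Submission
  imports Defs
begin

text \<open>At the optimum \<open>p = c T(p)\<close>, so \<open>E = c / \<parallel>c T(p)\<parallel>\<^sub>b = 1 / \<parallel>T(p)\<parallel>\<^sub>b\<close>. Since the optimal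
  power vector grows with the budget and \<open>T\<close> and \<open>\<parallel>\<cdot>\<parallel>\<^sub>b\<close> are monotone, \<open>\<parallel>T(p)\<parallel>\<^sub>b\<close> grows too.\<close>

lemma is_norm_scaleR:
  assumes "is_norm nm"
  shows "nm (c *\<^sub>R x) = \<bar>c\<bar> * nm x"
  using assms unfolding is_norm_def by blast

lemma is_norm_pos:
  assumes "is_norm nm" and "x \<noteq> 0"
  shows "0 < nm x"
  using assms unfolding is_norm_def by (metis order_le_less)

lemma standard_interference_mapping_pos:
  assumes "standard_interference_mapping T" and "nonneg_vec x"
  shows "0 < T x $ i"
  using assms unfolding standard_interference_mapping_def standard_interference_function_def
  by blast

lemma standard_interference_mapping_nonneg:
  assumes "standard_interference_mapping T" and "nonneg_vec x"
  shows "nonneg_vec (T x)"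
  using standard_interference_mapping_pos[OF assms] unfolding nonneg_vec_def
  by (simp add: less_imp_le)

lemma standard_interference_mapping_nonzero:
  assumes "standard_interference_mapping T" and "nonneg_vec x"
  shows "T x \<noteq> 0"
  using standard_interference_mapping_pos[OF assms] by (metis less_irrefl zero_index)

lemma standard_interference_mapping_mono:
  assumes "standard_interference_mapping T"
    and "nonneg_vec x" and "nonneg_vec y" and "vec_le x y"
  shows "vec_le (T x) (T y)"
  using assms
  unfolding vec_le_def standard_interference_mapping_def standard_interference_function_def
  by blast

lemma monotone_norm_mono_standard_interference:
  assumes "monotone_norm nm" and "standard_interference_mapping T"
    and "nonneg_vec x" and "nonneg_vec y" and "vec_le x y"
  shows "nm (T x) \<le> nm (T y)"
  using assms standard_interference_mapping_nonneg standard_interference_mapping_mono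
  unfolding monotone_norm_def by blast

lemma is_solution_sol:
  assumes "\<exists>!pc. is_solution T na pbar (fst pc) (snd pc)"
  shows "is_solution T na pbar (P T na pbar) (U T na pbar)"
  using theI'[OF assms] unfolding sol_def P_def U_def .

lemma feasible_E_eq:
  assumes "standard_interference_mapping T" and "is_norm nb"
    and "feasible T na pbar p c"
  shows "c / nb p = 1 / nb (T p)"
proof -
  have "0 < c" and p_eq: "p = c *\<^sub>R T p" and "nonneg_vec p"
    using assms(3) unfolding feasible_def by auto
  moreover have "0 < nb (T p)"
    using is_norm_pos[OF assms(2) standard_interference_mapping_nonzero[OF assms(1)]]
      \<open>nonneg_vec p\<close> .
  ultimately show ?thesis
    using is_norm_scaleR[OF assms(2), of c "T p"] p_eq by simp
qed

lemma E_eq_inverse_norm_T: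
  assumes "standard_interference_mapping T" and "is_norm nb"
    and "\<exists>!pc. is_solution T na pbar (fst pc) (snd pc)"
  shows "E T na nb pbar = 1 / nb (T (P T na pbar))"
  using feasible_E_eq[OF assms(1,2)] is_solution_sol[OF assms(3)]
  unfolding E_def is_solution_def by blast

theorem lemma2:
  fixes T :: "real ^ 'n \<Rightarrow> real ^ 'n"
    and na nb :: "real ^ 'n \<Rightarrow> real"
  assumes "standard_interference_mapping T"
    and "monotone_norm na"
    and "monotone_norm nb"
    and known_unique: "\<And>pbar. 0 < pbar \<Longrightarrow>
           \<exists>!pc. is_solution T na pbar (fst pc) (snd pc)"
    and known_pos: "\<And>pbar i. 0 < pbar \<Longrightarrow> 0 < P T na pbar $ i"
    and known_mono: "\<And>pbar1 pbar2 i. pbar1 > pbar2 \<Longrightarrow> pbar2 > 0 \<Longrightarrow>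
           P T na pbar1 $ i > P T na pbar2 $ i"
  shows "\<forall>pbar1 pbar2. pbar1 > pbar2 \<and> pbar2 > 0 \<longrightarrow> E T na nb pbar1 \<le> E T na nb pbar2"
proof (intro allI impI, elim conjE)
  fix p1 p2 :: real
  assume "p1 > p2" "p2 > 0"
  have nb: "is_norm nb" using assms(3) unfolding monotone_norm_def by simp
  have E_eq: "E T na nb p = 1 / nb (T (P T na p))" if "0 < p" for p
    using E_eq_inverse_norm_T[OF assms(1) nb known_unique[OF that]] .
  have nonneg: "nonneg_vec (P T na p)" if "0 < p" for p
    using known_pos[OF that] unfolding nonneg_vec_def by (simp add: less_imp_le)
  have "vec_le (P T na p2) (P T na p1)"
    unfolding vec_le_def using known_mono[OF \<open>p1 > p2\<close> \<open>p2 > 0\<close>] by (simp add: less_imp_le)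
  then have "nb (T (P T na p2)) \<le> nb (T (P T na p1))"
    using monotone_norm_mono_standard_interference[OF assms(3,1)] nonneg \<open>p1 > p2\<close> \<open>p2 > 0\<close>
    by simp
  moreover have "0 < nb (T (P T na p2))"
    using is_norm_pos[OF nb standard_interference_mapping_nonzero[OF assms(1) nonneg]] \<open>p2 > 0\<close> .
  ultimately show "E T na nb p1 \<le> E T na nb p2"
    using E_eq \<open>p1 > p2\<close> \<open>p2 > 0\<close> by (simp add: frac_le)
qed

end
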